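(* Let $K\subseteq\mathbb{R}^d$ be closed, convex, line-free and with non-empty interior, and let $\alpha\in\operatorname{Int}(\operatorname{rec}(K)^* )\setminus\{0\}$ with $\inf_{x\in K}\alpha^\top x=0$. Let $c_{K,\alpha}:=\int_K e^{-\alpha^\top x}\,dx$. Then \[ \gamma(d,t):=1-e^{-t}\sum_{\ell=0}^{d-1}\frac{t^\ell}{\ell!}\leq\frac{\mu_d(K_{\alpha,t}^+)}{c_{K,\alpha}}\leq e^t \] for all $t>0$. Moreover, if $1\le s\le t-1$, then \[ \mu_d(\breve K_{\alpha,t})\leq\frac{t^d-(t-1)^d}{s^d-(s-1)^d}\,\mu_d(\breve K_{\alpha,s}). \]
   Context: $\operatorname{rec}(K):=\{u:K+u\subseteq K\}$, $C^*:=\{\alpha:\alpha^\top x\ge0\ \forall x\in C\}$; $K$ is line-free if it contains no line. $K_{\alpha,t}^+:=K\cap\{x:\alpha^\top x\le t\}$ and $\breve K_{\alpha,t}:=K\cap\{x:t-1\le\alpha^\top x\le t\}$. $\mu_d$ is Lebesgue measure. *)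

theory Defs
  imports "HOL-Analysis.Analysis"
begin

definition rec_cone :: "'a::real_vector set \<Rightarrow> 'a set" where
  "rec_cone K = {u. (\<lambda>x. x + u) ` K \<subseteq> K}"

definition dual_cone :: "'a::real_inner set \<Rightarrow> 'a set" where
  "dual_cone C = {\<alpha>. \<forall>x\<in>C. \<alpha> \<bullet> x \<ge> 0}"

definition line_free :: "'a::real_vector set \<Rightarrow> bool" where
  "line_free K \<longleftrightarrow> \<not> (\<exists>x v. v \<noteq> 0 \<and> (\<forall>t::real. x + t *\<^sub>R v \<in> K))"

definition lower_cap :: "'a::real_inner set \<Rightarrow> 'a \<Rightarrow> real \<Rightarrow> 'a set" where
  "lower_cap K \<alpha> t = K \<inter> {x. \<alpha> \<bullet> x \<le> t}"

definition slab :: "'a::real_inner set \<Rightarrow> 'a \<Rightarrow> real \<Rightarrow> 'a set" where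
  "slab K \<alpha> t = K \<inter> {x. t - 1 \<le> \<alpha> \<bullet> x \<and> \<alpha> \<bullet> x \<le> t}"

definition gamma_fn :: "nat \<Rightarrow> real \<Rightarrow> real" where
  "gamma_fn d t = 1 - exp (- t) * (\<Sum>l<d. t ^ l / fact l)"

end

theory Submission
  imports Defs
begin

text \<open>Write \<open>f(u)\<close> for the volume of the cap \<open>K \<inter> {\<alpha> \<bullet> x \<le> u}\<close>. Because \<open>\<alpha>\<close> is positive
  on every non-zero recession direction of \<open>K\<close>, the caps are compact and \<open>\<alpha> \<bullet> x\<close> attains its
  minimum \<open>0\<close> at some apex \<open>x0 \<in> K\<close>. The homothety with centre \<open>x0\<close> and ratio \<open>l \<le> 1\<close> maps
  \<open>K\<close> into itself and multiplies levels by \<open>l\<close>, so \<open>l\<^sup>d (f b - f a) \<le> f (l b) - f (l a)\<close>.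
  Hence \<open>f u \<le> (u/t)\<^sup>d f t\<close> for \<open>u \<ge> t\<close>; inserted into the layer-cake formula
  \<open>c = \<integral> e\<^sup>-\<^sup>u f(u) du\<close>, together with \<open>f u \<le> f t\<close> for \<open>u \<le> t\<close> and \<open>c \<ge> e\<^sup>-\<^sup>t f t\<close>, this
  gives both bounds on \<open>f(t)/c\<close>. For the slabs, the same inequality says that
  \<open>w \<mapsto> f(w\<^sup>1\<^sup>/\<^sup>d)\<close> has increments of non-increasing density, which compares \<open>[t-1, t]\<close>
  with \<open>[s-1, s]\<close>.\<close>

lemma interior_dual_cone_pos:
  fixes \<alpha> :: "'a::real_inner"
  assumes "\<alpha> \<in> interior (dual_cone C)" "u \<in> C" "u \<noteq> 0"
  shows "0 < \<alpha> \<bullet> u"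
proof -
  obtain e where e: "e > 0" "ball \<alpha> e \<subseteq> dual_cone C"
    using assms(1) by (meson mem_interior)
  define w where "w = \<alpha> - (e / 2 / norm u) *\<^sub>R u"
  have "w \<in> ball \<alpha> e"
    using e assms(3) by (simp add: w_def dist_norm)
  then have "0 \<le> w \<bullet> u"
    using e(2) assms(2) unfolding dual_cone_def by blast
  also have "w \<bullet> u = \<alpha> \<bullet> u - e / 2 * norm u"
    using assms(3) by (simp add: w_def inner_diff_left dot_square_norm power2_eq_square)
  finally have "e / 2 * norm u \<le> \<alpha> \<bullet> u"
    by simp
  moreover have "0 < e / 2 * norm u"
    using e(1) assms(3) by simp
  ultimately show ?thesis
    by linarith
qed

lemma unbounded_closed_convex_contains_ray:
  fixes S :: "'a::euclidean_space set"
  assumes "closed S" "convex S" "p \<in> S" "\<not> bounded S"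
  obtains l where "norm l = 1" "\<And>\<rho>. 0 \<le> \<rho> \<Longrightarrow> p + \<rho> *\<^sub>R l \<in> S"
proof -
  have "\<exists>x\<in>S. real n < norm (x - p)" for n :: nat
    using assms(4) unfolding bounded_any_center[of S p] by (metis dist_commute dist_norm not_le)
  then obtain x where x: "\<And>n. x n \<in> S" "\<And>n. real n < norm (x n - p)"
    by metis
  define v where "v n = (1 / norm (x n - p)) *\<^sub>R (x n - p)" for n
  have "v n \<in> sphere 0 1" for n
  proof -
    have "0 < norm (x n - p)"
      using x(2)[of n] by (metis of_nat_0_le_iff order_le_less_trans)
    then show ?thesis
      by (simp add: v_def)
  qed
  then obtain l r where l: "l \<in> sphere 0 1" and r: "strict_mono r" and lim: "(v \<circ> r) \<longlonglongrightarrow> l"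
    using compact_sphere[of "0::'a" 1] unfolding compact_eq_seq_compact_metric seq_compact_def
    by metis
  have "p + \<rho> *\<^sub>R l \<in> S" if "0 \<le> \<rho>" for \<rho>
  proof (rule Lim_in_closed_set[OF assms(1) _ trivial_limit_sequentially])
    show "(\<lambda>n. p + \<rho> *\<^sub>R v (r n)) \<longlonglongrightarrow> p + \<rho> *\<^sub>R l"
      using lim unfolding comp_def by (intro tendsto_intros)
    obtain N :: nat where "\<rho> \<le> real N"
      using real_arch_simple by blast
    have "p + \<rho> *\<^sub>R v (r n) \<in> S" if "N \<le> n" for n
    proof -
      let ?m = "\<rho> / norm (x (r n) - p)"
      have "real N \<le> real (r n)"
        using that seq_suble[OF r, of n] by simp
      then have "\<rho> < norm (x (r n) - p)"
        using \<open>\<rho> \<le> real N\<close> x(2)[of "r n"] by linarith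
      then have "0 \<le> ?m" "?m \<le> 1"
        using \<open>0 \<le> \<rho>\<close> by (simp_all add: divide_le_eq)
      moreover have "p + \<rho> *\<^sub>R v (r n) = (1 - ?m) *\<^sub>R p + ?m *\<^sub>R x (r n)"
        by (simp add: v_def algebra_simps)
      ultimately show ?thesis
        using convexD[OF assms(2) assms(3) x(1)] by simp
    qed
    then show "\<forall>\<^sub>F n in sequentially. p + \<rho> *\<^sub>R v (r n) \<in> S"
      unfolding eventually_sequentially by blast
  qed
  then show ?thesis
    using that l by simp
qed

lemma closed_convex_ray_in_rec_cone:
  fixes K :: "'a::real_normed_vector set"
  assumes "closed K" "convex K" "p \<in> K" "\<And>\<rho>. 0 \<le> \<rho> \<Longrightarrow> p + \<rho> *\<^sub>R l \<in> K"
  shows "l \<in> rec_cone K"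
  unfolding rec_cone_def
proof clarify
  fix q assume "q \<in> K"
  define m where "m n = 1 / real (Suc n)" for n
  have "q + l + m n *\<^sub>R (p - q) \<in> K" for n
  proof -
    have "m n \<noteq> 0"
      by (simp add: m_def)
    then have "q + l + m n *\<^sub>R (p - q) = (1 - m n) *\<^sub>R q + m n *\<^sub>R (p + (1 / m n) *\<^sub>R l)"
      by (simp add: algebra_simps)
    also have "\<dots> \<in> K"
      using \<open>q \<in> K\<close> assms(4)[of "1 / m n"] by (intro convexD[OF assms(2)]) (auto simp: m_def)
    finally show ?thesis .
  qed
  moreover have "(\<lambda>n. q + l + m n *\<^sub>R (p - q)) \<longlonglongrightarrow> q + l + 0 *\<^sub>R (p - q)"
    unfolding m_def by (intro tendsto_intros LIMSEQ_Suc[OF lim_inverse_n'])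
  ultimately show "q + l \<in> K"
    by (intro Lim_in_closed_set[OF assms(1) _ trivial_limit_sequentially]) auto
qed

lemma bounded_lower_cap:
  fixes K :: "'a::euclidean_space set"
  assumes "closed K" "convex K" and pos: "\<And>u. u \<in> rec_cone K \<Longrightarrow> u \<noteq> 0 \<Longrightarrow> 0 < \<alpha> \<bullet> u"
  shows "bounded (lower_cap K \<alpha> t)"
proof (rule ccontr)
  assume unbounded: "\<not> bounded (lower_cap K \<alpha> t)"
  then obtain p where p: "p \<in> lower_cap K \<alpha> t"
    by (metis bounded_empty equals0I)
  have "closed (lower_cap K \<alpha> t)" "convex (lower_cap K \<alpha> t)"
    using assms(1,2)
    by (simp_all add: lower_cap_def closed_Int closed_halfspace_le convex_Int convex_halfspace_le)
  then obtain l where l: "norm l = 1" "\<And>\<rho>. 0 \<le> \<rho> \<Longrightarrow> p + \<rho> *\<^sub>R l \<in> lower_cap K \<alpha> t"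
    using unbounded_closed_convex_contains_ray p unbounded by metis
  have "l \<in> rec_cone K"
    using l(2) p assms(1,2) by (intro closed_convex_ray_in_rec_cone[of K p]) (auto simp: lower_cap_def)
  then have "0 < \<alpha> \<bullet> l"
    using pos l(1) by force
  define \<rho> where "\<rho> = (t - \<alpha> \<bullet> p + 1) / (\<alpha> \<bullet> l)"
  have "0 \<le> \<rho>"
    using p \<open>0 < \<alpha> \<bullet> l\<close> by (simp add: \<rho>_def lower_cap_def)
  then have "\<alpha> \<bullet> (p + \<rho> *\<^sub>R l) \<le> t"
    using l(2) by (simp add: lower_cap_def)
  moreover have "\<alpha> \<bullet> (p + \<rho> *\<^sub>R l) = t + 1"
    using \<open>0 < \<alpha> \<bullet> l\<close> by (simp add: \<rho>_def inner_add_right)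
  ultimately show False
    by simp
qed

lemma compact_sublevels_attains_inf:
  fixes f :: "'a::topological_space \<Rightarrow> real"
  assumes "K \<noteq> {}" "continuous_on K f" "\<And>t. compact (K \<inter> {x. f x \<le> t})"
  obtains x0 where "x0 \<in> K" "\<And>x. x \<in> K \<Longrightarrow> f x0 \<le> f x"
proof -
  obtain y where "y \<in> K"
    using assms(1) by blast
  let ?C = "K \<inter> {x. f x \<le> f y}"
  have "continuous_on ?C f"
    using assms(2) by (rule continuous_on_subset) auto
  then obtain x0 where "x0 \<in> ?C" "\<And>x. x \<in> ?C \<Longrightarrow> f x0 \<le> f x"
    using continuous_attains_inf[OF assms(3)] \<open>y \<in> K\<close> by blast
  then show ?thesis
    using that[of x0] by force
qed

lemma gamma_fn_Suc: "gamma_fn (Suc d) t = gamma_fn d t - exp (- t) * t ^ d / fact d"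
  by (simp add: gamma_fn_def algebra_simps)

lemma gamma_fn_Suc_has_real_derivative:
  "(gamma_fn (Suc d) has_real_derivative exp (- u) * u ^ d / fact d) (at u)"
proof (induction d)
  case 0
  show ?case
    unfolding gamma_fn_def by (auto intro!: derivative_eq_intros)
next
  case (Suc d)
  have pow: "((\<lambda>u. u ^ Suc d) has_real_derivative real (Suc d) * u ^ d) (at u)"
    using DERIV_pow[of "Suc d" u] by simp
  have "((\<lambda>u. exp (- u) * u ^ Suc d / fact (Suc d)) has_real_derivative
          (- exp (- u) * u ^ Suc d + real (Suc d) * u ^ d * exp (- u)) / fact (Suc d)) (at u)"
    by (intro DERIV_cdivide DERIV_mult pow) (auto intro!: derivative_eq_intros)
  also have "(- exp (- u) * u ^ Suc d + real (Suc d) * u ^ d * exp (- u)) / fact (Suc d)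
               = exp (- u) * u ^ d / fact d - exp (- u) * u ^ Suc d / fact (Suc d)"
    by (simp add: fact_Suc field_simps del: of_nat_Suc)
  finally have "((\<lambda>u. exp (- u) * u ^ Suc d / fact (Suc d)) has_real_derivative
                  exp (- u) * u ^ d / fact d - exp (- u) * u ^ Suc d / fact (Suc d)) (at u)" .
  from DERIV_diff[OF Suc.IH this] show ?case
    unfolding gamma_fn_Suc[of "Suc d", abs_def] by simp
qed

lemma gamma_fn_tendsto_1: "(gamma_fn d \<longlongrightarrow> 1) at_top"
proof -
  have "((\<lambda>u::real. u ^ l / exp u / fact l) \<longlongrightarrow> 0) at_top" for l :: nat
    by (intro tendsto_divide_zero tendsto_power_div_exp_0)
  then have "((\<lambda>u::real. \<Sum>l<d. u ^ l / exp u / fact l) \<longlongrightarrow> 0) at_top"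
    by (intro tendsto_null_sum)
  moreover have "gamma_fn d = (\<lambda>u. 1 - (\<Sum>l<d. u ^ l / exp u / fact l))"
    by (simp add: fun_eq_iff gamma_fn_def sum_distrib_left exp_minus field_simps)
  ultimately show ?thesis
    using tendsto_diff[OF tendsto_const[of 1]] by fastforce
qed

lemma gamma_fn_bounds:
  assumes "0 < t"
  shows "0 \<le> gamma_fn d t" "gamma_fn d t \<le> 1" "fact d * gamma_fn d t \<le> t ^ d"
proof -
  show "gamma_fn d t \<le> 1"
    unfolding gamma_fn_def using assms by (simp add: sum_nonneg)
  obtain \<xi> where \<xi>: "\<bar>\<xi>\<bar> \<le> \<bar>t\<bar>" "exp t = (\<Sum>l<d. t ^ l / fact l) + exp \<xi> / fact d * t ^ d"
    using Maclaurin_exp_le[of t d] by blast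
  have "gamma_fn d t = exp (- t) * (exp t - (\<Sum>l<d. t ^ l / fact l))"
    by (simp add: gamma_fn_def right_diff_distrib exp_minus)
  also have "exp t - (\<Sum>l<d. t ^ l / fact l) = exp \<xi> / fact d * t ^ d"
    using \<xi>(2) by simp
  also have "exp (- t) * (exp \<xi> / fact d * t ^ d) = exp (\<xi> - t) * t ^ d / fact d"
    by (simp add: exp_diff exp_minus divide_inverse mult_ac)
  finally have \<gamma>: "gamma_fn d t = exp (\<xi> - t) * t ^ d / fact d" .
  show "0 \<le> gamma_fn d t"
    unfolding \<gamma> using assms by simp
  have "exp (\<xi> - t) \<le> 1"
    using \<xi>(1) assms by simp
  then show "fact d * gamma_fn d t \<le> t ^ d"
    unfolding \<gamma> using assms by (simp add: mult_left_le_one_le)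
qed

lemma gamma_fn_mult_le_1:
  assumes "0 < t"
  shows "gamma_fn d t * (1 + fact d * (1 - gamma_fn d t) / t ^ d) \<le> 1"
proof -
  let ?g = "gamma_fn d t"
  have "?g * (1 + fact d * (1 - ?g) / t ^ d) = ?g + (fact d * ?g) * (1 - ?g) / t ^ d"
    by (simp add: field_simps)
  also have "\<dots> \<le> ?g + t ^ d * (1 - ?g) / t ^ d"
    using gamma_fn_bounds[OF assms, of d] assms
    by (intro add_left_mono divide_right_mono mult_right_mono) auto
  also have "\<dots> = 1"
    using assms by simp
  finally show ?thesis .
qed

lemma nn_integral_exp_atLeast:
  "(\<integral>\<^sup>+u. ennreal (exp (- u)) * indicator {a..} u \<partial>lborel) = ennreal (exp (- a))"
proof -
  have "(\<integral>\<^sup>+u. ennreal (exp (- u)) * indicator {a..} u \<partial>lborel) = ennreal (0 - (- exp (- a)))"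
  proof (rule nn_integral_FTC_atLeast)
    show "((\<lambda>u::real. - exp (- u)) \<longlongrightarrow> 0) at_top"
      using tendsto_minus[OF filterlim_compose[OF exp_at_bot filterlim_uminus_at_bot_at_top]] by simp
  qed (auto intro!: derivative_eq_intros)
  then show ?thesis
    by simp
qed

lemma nn_integral_exp_Icc:
  assumes "0 \<le> t"
  shows "(\<integral>\<^sup>+u. ennreal (exp (- u)) * indicator {0..t} u \<partial>lborel) = ennreal (1 - exp (- t))"
proof -
  have "(\<integral>\<^sup>+u. ennreal (exp (- u)) * indicator {0..t} u \<partial>lborel) = ennreal (- exp (- t) - (- exp (- 0)))"
    using assms by (intro nn_integral_FTC_Icc) (auto intro!: derivative_eq_intros)
  then show ?thesis
    by simp
qed

lemma nn_integral_exp_power_atLeast: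
  assumes "0 \<le> t"
  shows "(\<integral>\<^sup>+u. ennreal (exp (- u) * u ^ d) * indicator {t..} u \<partial>lborel)
           = ennreal (fact d * (1 - gamma_fn (Suc d) t))"
proof -
  have "(\<integral>\<^sup>+u. ennreal (exp (- u) * u ^ d) * indicator {t..} u \<partial>lborel)
          = ennreal (fact d * 1 - fact d * gamma_fn (Suc d) t)"
  proof (rule nn_integral_FTC_atLeast)
    show "DERIV (\<lambda>u. fact d * gamma_fn (Suc d) u) u :> exp (- u) * u ^ d" for u
      using DERIV_cmult[OF gamma_fn_Suc_has_real_derivative, of "fact d" d u] by simp
    show "((\<lambda>u. fact d * gamma_fn (Suc d) u) \<longlongrightarrow> fact d * 1) at_top"
      by (intro tendsto_mult tendsto_const gamma_fn_tendsto_1)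
  qed (use assms in auto)
  then show ?thesis
    by (simp add: right_diff_distrib)
qed

lemma exists_step_increment_le:
  fixes a b :: "nat \<Rightarrow> real"
  assumes "0 < n" "b n - b 0 \<le> a n - a 0"
  obtains j where "j < n" "b (Suc j) - b j \<le> a (Suc j) - a j"
proof -
  have "\<exists>j<n. b (Suc j) - b j \<le> a (Suc j) - a j"
  proof (rule ccontr)
    assume "\<not> ?thesis"
    then have "(\<Sum>j<n. a (Suc j) - a j) < (\<Sum>j<n. b (Suc j) - b j)"
      using assms(1) by (intro sum_strict_mono) (auto simp: not_le)
    then show False
      using assms(2) by (simp add: sum_lessThan_telescope)
  qed
  then show ?thesis
    using that by blast
qed

lemma exists_geometric_grid_point:
  fixes x A r :: real
  assumes "0 < x" "x \<le> A" "1 < r"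
  obtains k where "A / r ^ k \<le> x" "x < r * (A / r ^ k)"
proof -
  obtain k0 where "A / x < r ^ k0"
    using real_arch_pow[OF assms(3)] by blast
  then have "A / r ^ k0 \<le> x"
    using assms by (simp add: field_simps)
  define k where "k = (LEAST k. A / r ^ k \<le> x)"
  have "A / r ^ k \<le> x"
    unfolding k_def by (rule LeastI[of _ k0]) fact
  moreover have "x < r * (A / r ^ k)"
  proof (cases k)
    case 0
    then show ?thesis
      using \<open>A / r ^ k \<le> x\<close> assms by simp
  next
    case (Suc j)
    then have "\<not> A / r ^ j \<le> x"
      using not_less_Least[of j "\<lambda>k. A / r ^ k \<le> x"] unfolding k_def by auto
    then show ?thesis
      using Suc assms(3) by simp
  qed
  ultimately show ?thesis
    using that by blast
qed

text \<open>Scaling by a power of \<open>r\<close> moves each cell \<open>[A r\<^sup>j, A r\<^sup>j\<^sup>+\<^sup>1]\<close> of the geometric grid onto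
  another cell, and \<open>scale\<close> says that moving a cell towards \<open>0\<close> cannot lower the slope of \<open>F\<close> on
  it. Some cell of \<open>[A, A r\<^sup>n]\<close> has at least the average slope \<open>S\<close>, hence so does every cell
  below \<open>A\<close>.\<close>

lemma geometric_grid_increment_ge:
  fixes F :: "real \<Rightarrow> real"
  assumes scale: "\<And>x y m. 0 \<le> x \<Longrightarrow> x \<le> y \<Longrightarrow> 0 < m \<Longrightarrow> m \<le> 1 \<Longrightarrow>
                     m * (F y - F x) \<le> F (m * y) - F (m * x)"
    and "0 < A" "1 < r" "0 < n" and slope: "F (A * r ^ n) - F A = S * (A * r ^ n - A)"
    and "k1 \<le> k2"
  shows "S * (A / r ^ k1 - A / r ^ k2) \<le> F (A / r ^ k1) - F (A / r ^ k2)"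
proof -
  obtain j where j: "S * (A * r ^ Suc j) - S * (A * r ^ j) \<le> F (A * r ^ Suc j) - F (A * r ^ j)"
    using exists_step_increment_le[of n "\<lambda>j. S * (A * r ^ j)" "\<lambda>j. F (A * r ^ j)"] assms(4) slope
    by (auto simp: right_diff_distrib)
  have cell: "S * (A / r ^ k - A / r ^ Suc k) \<le> F (A / r ^ k) - F (A / r ^ Suc k)" for k
  proof -
    define m where "m = 1 / r ^ (Suc k + j)"
    have "1 \<le> r ^ (Suc k + j)"
      using assms(3) by (intro one_le_power) simp
    then have m: "0 < m" "m \<le> 1"
      by (auto simp: m_def)
    have hi: "m * (A * r ^ Suc j) = A / r ^ k" and lo: "m * (A * r ^ j) = A / r ^ Suc k"
      using assms(3) by (simp_all add: m_def power_add field_simps)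
    have "S * (A / r ^ k - A / r ^ Suc k) = m * (S * (A * r ^ Suc j) - S * (A * r ^ j))"
      unfolding hi[symmetric] lo[symmetric] by (simp add: algebra_simps)
    also have "\<dots> \<le> m * (F (A * r ^ Suc j) - F (A * r ^ j))"
      using j m by (simp add: mult_left_mono)
    also have "\<dots> \<le> F (A / r ^ k) - F (A / r ^ Suc k)"
      using scale[OF _ _ m, of "A * r ^ j" "A * r ^ Suc j"] assms(2,3) hi lo by simp
    finally show ?thesis .
  qed
  show ?thesis
    using \<open>k1 \<le> k2\<close>
  proof (induction k2 rule: dec_induct)
    case (step k)
    then show ?case
      using cell[of k] by (simp add: algebra_simps)
  qed simp
qed

lemma increment_ge_slope_approx:
  fixes F :: "real \<Rightarrow> real"
  assumes mono: "\<And>x y. 0 \<le> x \<Longrightarrow> x \<le> y \<Longrightarrow> F x \<le> F y"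
    and scale: "\<And>x y m. 0 \<le> x \<Longrightarrow> x \<le> y \<Longrightarrow> 0 < m \<Longrightarrow> m \<le> 1 \<Longrightarrow>
                     m * (F y - F x) \<le> F (m * y) - F (m * x)"
    and "0 < C" "C < D" "D \<le> A" "1 < r" "0 < n"
    and slope: "F (A * r ^ n) - F A = S * (A * r ^ n - A)" "0 \<le> S"
  shows "S * (D / r - C * r) \<le> F D - F C"
proof (cases "D / r \<le> C * r")
  case True
  then have "S * (D / r - C * r) \<le> 0"
    using slope(2) by (simp add: mult_nonneg_nonpos)
  also have "0 \<le> F D - F C"
    using mono[of C D] assms(3,4) by simp
  finally show ?thesis .
next
  case False
  have "C * r < D / r"
    using False by simp
  also have "D / r \<le> D"
    using divide_left_mono[of 1 r D] assms(3,4,6) by simp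
  finally have "C * r < D" .
  obtain k1 where k1: "A / r ^ k1 \<le> D" "D < r * (A / r ^ k1)"
    using exists_geometric_grid_point[of D A r] assms(3-6) by auto
  obtain k2 where k2: "A / r ^ k2 \<le> C * r" "C * r < r * (A / r ^ k2)"
    using exists_geometric_grid_point[of "C * r" A r] assms(3-6) \<open>C * r < D\<close> by auto
  have "D / r < A / r ^ k1"
    using k1(2) assms(6) by (simp add: divide_less_eq mult.commute)
  then have "A / r ^ k2 < A / r ^ k1"
    using k2(1) False by linarith
  have "k1 \<le> k2"
  proof (rule ccontr)
    assume "\<not> k1 \<le> k2"
    then have "r ^ k2 \<le> r ^ k1"
      using assms(6) by (intro power_increasing) auto
    then have "A / r ^ k1 \<le> A / r ^ k2"
      using assms(3-6) by (intro divide_left_mono) auto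
    then show False
      using \<open>A / r ^ k2 < A / r ^ k1\<close> by simp
  qed
  have "S * (D / r - C * r) \<le> S * (A / r ^ k1 - A / r ^ k2)"
    using slope(2) \<open>D / r < A / r ^ k1\<close> k2(1) by (intro mult_left_mono) auto
  also have "\<dots> \<le> F (A / r ^ k1) - F (A / r ^ k2)"
    using geometric_grid_increment_ge[OF scale _ assms(6,7) slope(1) \<open>k1 \<le> k2\<close>] assms(3-5)
    by simp
  also have "\<dots> \<le> F D - F C"
  proof -
    have "C < A / r ^ k2"
      using k2(2) assms(6) by (smt (verit) mult.commute mult_less_cancel_left_pos)
    then show ?thesis
      using mono[OF _ k1(1)] mono[of C "A / r ^ k2"] assms(3-6) by simp
  qed
  finally show ?thesis .
qed

lemma slope_mult_le_increment:
  fixes F :: "real \<Rightarrow> real"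
  assumes mono: "\<And>x y. 0 \<le> x \<Longrightarrow> x \<le> y \<Longrightarrow> F x \<le> F y"
    and scale: "\<And>x y m. 0 \<le> x \<Longrightarrow> x \<le> y \<Longrightarrow> 0 < m \<Longrightarrow> m \<le> 1 \<Longrightarrow>
                     m * (F y - F x) \<le> F (m * y) - F (m * x)"
    and "0 < C" "C < D" "D \<le> A" "A < B"
  shows "(F B - F A) / (B - A) * (D - C) \<le> F D - F C"
proof -
  define S where "S = (F B - F A) / (B - A)"
  have "0 < A"
    using assms(3-5) by linarith
  then have "0 \<le> S" "F B - F A = S * (B - A)"
    using mono[of A B] assms(6) by (auto simp: S_def)
  define r where "r n = root n (B / A)" for n
  have "1 < B / A"
    using \<open>0 < A\<close> assms(6) by simp
  have "S * (D / r n - C * r n) \<le> F D - F C" if "0 < n" for n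
  proof (rule increment_ge_slope_approx[OF mono scale assms(3-5) _ that _ \<open>0 \<le> S\<close>])
    show "1 < r n"
      using \<open>1 < B / A\<close> that by (simp add: r_def)
    have "A * r n ^ n = B"
      using \<open>1 < B / A\<close> \<open>0 < A\<close> that by (simp add: r_def)
    then show "F (A * r n ^ n) - F A = S * (A * r n ^ n - A)"
      using \<open>F B - F A = S * (B - A)\<close> by simp
  qed
  then have "\<forall>\<^sub>F n in sequentially. S * (D / r n - C * r n) \<le> F D - F C"
    by (auto intro: eventually_sequentiallyI[of 1])
  moreover have "(\<lambda>n. S * (D / r n - C * r n)) \<longlonglongrightarrow> S * (D / 1 - C * 1)"
    unfolding r_def using \<open>1 < B / A\<close> by (intro tendsto_intros LIMSEQ_root_const) auto
  ultimately show ?thesis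
    unfolding S_def using tendsto_upperbound by fastforce
qed

lemma increment_slope_antimono:
  fixes F :: "real \<Rightarrow> real"
  assumes mono: "\<And>x y. 0 \<le> x \<Longrightarrow> x \<le> y \<Longrightarrow> F x \<le> F y"
    and scale: "\<And>x y m. 0 \<le> x \<Longrightarrow> x \<le> y \<Longrightarrow> 0 < m \<Longrightarrow> m \<le> 1 \<Longrightarrow>
                     m * (F y - F x) \<le> F (m * y) - F (m * x)"
    and "0 \<le> C" "C \<le> D" "D \<le> A" "A < B"
  shows "(F B - F A) * (D - C) \<le> (B - A) * (F D - F C)"
proof (cases "C = D")
  case False
  define S where "S = (F B - F A) / (B - A)"
  have "S * (D - C) \<le> F D - F C"
  proof (cases "C = 0")
    case True
    then have "0 < D"
      using \<open>C \<noteq> D\<close> assms(4) by simp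
    have "\<forall>\<^sub>F c in at_right 0. S * (D - c) \<le> F D - F 0"
      using eventually_at_right_real[OF \<open>0 < D\<close>]
    proof (rule eventually_mono)
      fix c :: real assume "c \<in> {0<..<D}"
      then show "S * (D - c) \<le> F D - F 0"
        using slope_mult_le_increment[OF mono scale _ _ assms(5,6), of c] mono[of 0 c]
        by (simp add: S_def)
    qed
    moreover have "((\<lambda>c. S * (D - c)) \<longlongrightarrow> S * (D - 0)) (at_right 0)"
      by (intro tendsto_intros)
    ultimately show ?thesis
      using True tendsto_upperbound[of _ _ "at_right (0::real)"] by fastforce
  next
    case False
    then show ?thesis
      using slope_mult_le_increment[OF mono scale _ _ assms(5,6)] \<open>C \<noteq> D\<close> assms(3,4)
      by (simp add: S_def)
  qed
  then have "(B - A) * (S * (D - C)) \<le> (B - A) * (F D - F C)"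
    using assms(6) by (intro mult_left_mono) auto
  moreover have "(B - A) * (S * (D - C)) = (F B - F A) * (D - C)"
    using assms(6) by (simp add: S_def)
  ultimately show ?thesis
    by simp
qed simp

lemma layer_cake_exp_inner:
  fixes K :: "'a::euclidean_space set"
  assumes [measurable]: "K \<in> sets borel"
  shows "(\<integral>\<^sup>+x. ennreal (indicator K x * exp (- (\<alpha> \<bullet> x))) \<partial>lborel)
       = (\<integral>\<^sup>+u. ennreal (exp (- u)) * emeasure lborel (K \<inter> {x. \<alpha> \<bullet> x \<le> u}) \<partial>lborel)"
proof -
  have "(\<integral>\<^sup>+x. ennreal (indicator K x * exp (- (\<alpha> \<bullet> x))) \<partial>lborel)
      = (\<integral>\<^sup>+x. (\<integral>\<^sup>+u. indicator K x * (ennreal (exp (- u)) * indicator {\<alpha> \<bullet> x..} u) \<partial>lborel) \<partial>lborel)"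
  proof (rule nn_integral_cong)
    fix x :: 'a
    have "ennreal (indicator K x * exp (- (\<alpha> \<bullet> x))) = indicator K x * ennreal (exp (- (\<alpha> \<bullet> x)))"
      by (simp add: indicator_def)
    also have "\<dots> = indicator K x * (\<integral>\<^sup>+u. ennreal (exp (- u)) * indicator {\<alpha> \<bullet> x..} u \<partial>lborel)"
      by (simp add: nn_integral_exp_atLeast)
    also have "\<dots> = (\<integral>\<^sup>+u. indicator K x * (ennreal (exp (- u)) * indicator {\<alpha> \<bullet> x..} u) \<partial>lborel)"
      by (rule nn_integral_cmult[symmetric]) measurable
    finally show "ennreal (indicator K x * exp (- (\<alpha> \<bullet> x))) = \<dots>" .
  qed
  also have "\<dots> = (\<integral>\<^sup>+u. (\<integral>\<^sup>+x. indicator K x * (ennreal (exp (- u)) * indicator {\<alpha> \<bullet> x..} u) \<partial>lborel) \<partial>lborel)"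
    by (subst lborel_pair.Fubini') (auto simp: case_prod_unfold indicator_def cong: measurable_cong_sets)
  also have "\<dots> = (\<integral>\<^sup>+u. ennreal (exp (- u)) * emeasure lborel (K \<inter> {x. \<alpha> \<bullet> x \<le> u}) \<partial>lborel)"
  proof (rule nn_integral_cong)
    fix u :: real
    have "(\<integral>\<^sup>+x. indicator K x * (ennreal (exp (- u)) * indicator {\<alpha> \<bullet> x..} u) \<partial>lborel)
        = (\<integral>\<^sup>+x. ennreal (exp (- u)) * indicator (K \<inter> {x. \<alpha> \<bullet> x \<le> u}) x \<partial>lborel)"
      by (intro nn_integral_cong) (auto simp: indicator_def)
    also have "\<dots> = ennreal (exp (- u)) * emeasure lborel (K \<inter> {x. \<alpha> \<bullet> x \<le> u})"
      by (intro nn_integral_cmult_indicator) measurable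
    finally show "(\<integral>\<^sup>+x. indicator K x * (ennreal (exp (- u)) * indicator {\<alpha> \<bullet> x..} u) \<partial>lborel) = \<dots>" .
  qed
  finally show ?thesis .
qed

lemma ennreal_mult_plus_mult:
  "0 \<le> a \<Longrightarrow> 0 \<le> b \<Longrightarrow> 0 \<le> x \<Longrightarrow> 0 \<le> y \<Longrightarrow>
    ennreal (a * x + b * y) = ennreal a * ennreal x + ennreal b * ennreal y"
  by (simp add: ennreal_plus ennreal_mult)

locale convex_bounded_caps =
  fixes K :: "'a::euclidean_space set" and \<alpha> x0 :: 'a
  assumes closed: "closed K" and convex: "convex K"
    and bounded_cap: "\<And>t. bounded (lower_cap K \<alpha> t)"
    and apex: "x0 \<in> K" "\<alpha> \<bullet> x0 = 0"
    and nonneg: "\<And>x. x \<in> K \<Longrightarrow> 0 \<le> \<alpha> \<bullet> x"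
begin

definition cap_measure :: "real \<Rightarrow> real" where
  "cap_measure t = measure lebesgue (lower_cap K \<alpha> t)"

lemma compact_lower_cap: "compact (lower_cap K \<alpha> t)"
  using bounded_cap[of t] closed
  by (simp add: compact_eq_bounded_closed lower_cap_def closed_Int closed_halfspace_le)

lemma lower_cap_lmeasurable: "lower_cap K \<alpha> t \<in> lmeasurable"
  by (rule lmeasurable_compact[OF compact_lower_cap])

lemma lower_cap_mono: "s \<le> t \<Longrightarrow> lower_cap K \<alpha> s \<subseteq> lower_cap K \<alpha> t"
  by (auto simp: lower_cap_def)

lemma cap_measure_nonneg: "0 \<le> cap_measure t"
  by (simp add: cap_measure_def)

lemma cap_measure_mono: "s \<le> t \<Longrightarrow> cap_measure s \<le> cap_measure t"
  unfolding cap_measure_def using lower_cap_lmeasurable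
  by (intro measure_mono_fmeasurable lower_cap_mono) auto

lemma cap_measure_eq_0:
  assumes "t < 0"
  shows "cap_measure t = 0"
proof -
  have "lower_cap K \<alpha> t = {}"
    using nonneg assms by (force simp: lower_cap_def)
  then show ?thesis
    by (simp add: cap_measure_def)
qed

lemma measure_lower_cap_diff:
  "s \<le> t \<Longrightarrow>
    measure lebesgue (lower_cap K \<alpha> t - lower_cap K \<alpha> s) = cap_measure t - cap_measure s"
  unfolding cap_measure_def using lower_cap_lmeasurable[of t]
  by (intro measure_Diff lower_cap_lmeasurable fmeasurableD lower_cap_mono)
     (auto simp: fmeasurable_def)

lemma emeasure_lower_cap: "emeasure lborel (lower_cap K \<alpha> t) = ennreal (cap_measure t)"
proof -
  have "lower_cap K \<alpha> t \<in> sets borel"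
    using compact_lower_cap by (simp add: borel_compact)
  moreover have "emeasure lborel (lower_cap K \<alpha> t) = ennreal (measure lborel (lower_cap K \<alpha> t))"
    using emeasure_bounded_finite[OF bounded_cap[of t]] by (intro emeasure_eq_ennreal_measure) auto
  ultimately show ?thesis
    by (simp add: cap_measure_def)
qed

lemma cap_measure_homothety:
  assumes "0 < l" "l \<le> 1" "s \<le> t"
  shows "l ^ DIM('a) * (cap_measure t - cap_measure s)
           \<le> cap_measure (l * t) - cap_measure (l * s)"
proof -
  define T where "T x = l *\<^sub>R x + (1 - l) *\<^sub>R x0" for x
  have level: "\<alpha> \<bullet> T x = l * (\<alpha> \<bullet> x)" for x
    using apex(2) by (simp add: T_def inner_add_right)
  have maps: "T ` (lower_cap K \<alpha> t - lower_cap K \<alpha> s)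
                \<subseteq> lower_cap K \<alpha> (l * t) - lower_cap K \<alpha> (l * s)"
  proof clarify
    fix x assume x: "x \<in> lower_cap K \<alpha> t" "x \<notin> lower_cap K \<alpha> s"
    have "T x \<in> K"
      using x(1) apex(1) assms(1,2) unfolding T_def lower_cap_def by (intro convexD[OF convex]) auto
    then show "T x \<in> lower_cap K \<alpha> (l * t) - lower_cap K \<alpha> (l * s)"
      using x assms(1) by (auto simp: lower_cap_def level mult_left_mono)
  qed
  have "inj T"
    using assms(1) by (auto simp: T_def inj_def)
  then have "T ` (lower_cap K \<alpha> t - lower_cap K \<alpha> s)
               = T ` lower_cap K \<alpha> t - T ` lower_cap K \<alpha> s"
    by (rule image_set_diff)
  moreover have "compact (T ` lower_cap K \<alpha> u)" for u
    unfolding T_def by (intro compact_continuous_image compact_lower_cap continuous_intros)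
  ultimately have image_sets: "T ` (lower_cap K \<alpha> t - lower_cap K \<alpha> s) \<in> sets lebesgue"
    by (simp add: sets.Diff lmeasurable_compact fmeasurableD)
  have "l ^ DIM('a) * (cap_measure t - cap_measure s)
          = measure lebesgue (T ` (lower_cap K \<alpha> t - lower_cap K \<alpha> s))"
    using measure_lebesgue_affine[of l "(1 - l) *\<^sub>R x0"] measure_lower_cap_diff[OF assms(3)]
      assms(1) by (simp add: T_def)
  also have "\<dots> \<le> measure lebesgue (lower_cap K \<alpha> (l * t) - lower_cap K \<alpha> (l * s))"
    using maps image_sets lower_cap_lmeasurable by (intro measure_mono_fmeasurable) auto
  also have "\<dots> = cap_measure (l * t) - cap_measure (l * s)"
    using assms by (intro measure_lower_cap_diff mult_left_mono) auto
  finally show ?thesis .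
qed

lemma cap_measure_le_power:
  assumes "0 < t" "t \<le> u"
  shows "cap_measure u \<le> (u / t) ^ DIM('a) * cap_measure t"
proof -
  have "(t / u) ^ DIM('a) * (cap_measure u - cap_measure (- 1))
          \<le> cap_measure (t / u * u) - cap_measure (t / u * - 1)"
    using assms by (intro cap_measure_homothety) auto
  then have "(t / u) ^ DIM('a) * cap_measure u \<le> cap_measure t"
    using assms by (simp add: cap_measure_eq_0)
  then have "(u / t) ^ DIM('a) * ((t / u) ^ DIM('a) * cap_measure u)
               \<le> (u / t) ^ DIM('a) * cap_measure t"
    using assms by (intro mult_left_mono) auto
  then show ?thesis
    using assms by (simp add: power_divide field_simps)
qed

lemma nn_integral_exp_cap_measure:
  "(\<integral>\<^sup>+x. ennreal (indicator K x * exp (- (\<alpha> \<bullet> x))) \<partial>lborel)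
     = (\<integral>\<^sup>+u. ennreal (exp (- u) * cap_measure u) \<partial>lborel)"
  using layer_cake_exp_inner[of K \<alpha>] closed emeasure_lower_cap
  by (simp add: borel_closed lower_cap_def ennreal_mult' cap_measure_nonneg)

lemma nn_integral_exp_cap_measure_ge:
  "ennreal (exp (- t) * cap_measure t) \<le> (\<integral>\<^sup>+u. ennreal (exp (- u) * cap_measure u) \<partial>lborel)"
proof -
  have "ennreal (exp (- t) * cap_measure t)
          = ennreal (cap_measure t) * (\<integral>\<^sup>+u. ennreal (exp (- u)) * indicator {t..} u \<partial>lborel)"
    by (simp add: nn_integral_exp_atLeast ennreal_mult' cap_measure_nonneg mult.commute)
  also have "\<dots> = (\<integral>\<^sup>+u. ennreal (cap_measure t) * (ennreal (exp (- u)) * indicator {t..} u) \<partial>lborel)"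
    by (rule nn_integral_cmult[symmetric]) measurable
  also have "\<dots> \<le> (\<integral>\<^sup>+u. ennreal (exp (- u) * cap_measure u) \<partial>lborel)"
    by (intro nn_integral_mono)
       (auto simp: indicator_def ennreal_mult'[symmetric] cap_measure_nonneg cap_measure_mono
             mult.commute intro!: ennreal_leI)
  finally show ?thesis .
qed

lemma exp_mult_cap_measure_le:
  assumes "0 < t"
  defines "d \<equiv> DIM('a)"
  shows "exp (- u) * cap_measure u \<le> cap_measure t * (exp (- u) * indicator {0..t} u)
           + cap_measure t / t ^ d * (exp (- u) * u ^ d * indicator {t..} u)"
proof (cases "u < 0")
  case True
  then show ?thesis
    using assms(1) by (simp add: cap_measure_eq_0 indicator_def)
next
  case False
  show ?thesis
  proof (cases "u \<le> t")
    case True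
    then show ?thesis
      using False assms(1) cap_measure_mono[OF True]
      by (simp add: indicator_def mult.commute cap_measure_nonneg)
  next
    case above: False
    have "exp (- u) * cap_measure u \<le> exp (- u) * ((u / t) ^ d * cap_measure t)"
      using cap_measure_le_power[of t u] assms(1) above by (simp add: d_def)
    then show ?thesis
      using above assms(1) cap_measure_nonneg[of t]
      by (simp add: indicator_def power_divide field_simps)
  qed
qed

lemma nn_integral_exp_cap_measure_le:
  assumes "0 < t"
  defines "d \<equiv> DIM('a)"
  shows "(\<integral>\<^sup>+u. ennreal (exp (- u) * cap_measure u) \<partial>lborel)
           \<le> ennreal (cap_measure t * (1 + fact d * (1 - gamma_fn d t) / t ^ d))"
proof -
  have "(\<integral>\<^sup>+u. ennreal (exp (- u) * cap_measure u) \<partial>lborel)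
        \<le> (\<integral>\<^sup>+u. ennreal (cap_measure t) * (ennreal (exp (- u)) * indicator {0..t} u)
               + ennreal (cap_measure t / t ^ d) * (ennreal (exp (- u) * u ^ d) * indicator {t..} u)
             \<partial>lborel)"
  proof (intro nn_integral_mono)
    fix u
    have "ennreal (exp (- u) * cap_measure u)
        \<le> ennreal (cap_measure t * (exp (- u) * indicator {0..t} u)
                  + cap_measure t / t ^ d * (exp (- u) * u ^ d * indicator {t..} u))"
      using exp_mult_cap_measure_le[OF assms(1)] unfolding d_def by (rule ennreal_leI)
    also have "\<dots> = ennreal (cap_measure t) * ennreal (exp (- u) * indicator {0..t} u)
               + ennreal (cap_measure t / t ^ d) * ennreal (exp (- u) * u ^ d * indicator {t..} u)"
    proof (rule ennreal_mult_plus_mult)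
      show "0 \<le> exp (- u) * u ^ d * indicator {t..} u"
        using assms(1) by (simp add: indicator_def)
    qed (use assms(1) cap_measure_nonneg[of t] in auto)
    also have "\<dots> = ennreal (cap_measure t) * (ennreal (exp (- u)) * indicator {0..t} u)
               + ennreal (cap_measure t / t ^ d) * (ennreal (exp (- u) * u ^ d) * indicator {t..} u)"
      by (simp add: indicator_def)
    finally show "ennreal (exp (- u) * cap_measure u) \<le> \<dots>" .
  qed
  also have "\<dots> = ennreal (cap_measure t) * (\<integral>\<^sup>+u. ennreal (exp (- u)) * indicator {0..t} u \<partial>lborel)
               + ennreal (cap_measure t / t ^ d)
                 * (\<integral>\<^sup>+u. ennreal (exp (- u) * u ^ d) * indicator {t..} u \<partial>lborel)"
    by (subst nn_integral_add) (auto simp: nn_integral_cmult)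
  also have "\<dots> = ennreal (cap_measure t * (1 - exp (- t))
                      + cap_measure t / t ^ d * (fact d * (1 - gamma_fn (Suc d) t)))"
    unfolding nn_integral_exp_Icc[OF less_imp_le[OF assms(1)]]
      nn_integral_exp_power_atLeast[OF less_imp_le[OF assms(1)]]
    using assms(1) cap_measure_nonneg[of t] gamma_fn_bounds(2)[of t "Suc d"]
    by (intro ennreal_mult_plus_mult[symmetric]) auto
  also have "cap_measure t * (1 - exp (- t))
               + cap_measure t / t ^ d * (fact d * (1 - gamma_fn (Suc d) t))
             = cap_measure t * (1 + fact d * (1 - gamma_fn d t) / t ^ d)"
    using assms(1) by (simp add: gamma_fn_Suc field_simps)
  finally show ?thesis .
qed

lemma nn_integral_exp_cap_measure_eq_integral:
  "(\<integral>\<^sup>+u. ennreal (exp (- u) * cap_measure u) \<partial>lborel)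
     = ennreal (integral K (\<lambda>x. exp (- (\<alpha> \<bullet> x))))"
proof -
  let ?N = "\<integral>\<^sup>+u. ennreal (exp (- u) * cap_measure u) \<partial>lborel"
  have "?N < \<infinity>"
    using nn_integral_exp_cap_measure_le[of 1] by (simp add: le_less_trans)
  then obtain c where c: "?N = ennreal c" "0 \<le> c"
    using ennreal_cases[of ?N] by auto
  have [measurable]: "K \<in> sets borel"
    using closed by (simp add: borel_closed)
  have "((\<lambda>x. indicator K x * exp (- (\<alpha> \<bullet> x))) has_integral c) UNIV"
  proof (rule nn_integral_has_integral)
    show "(\<integral>\<^sup>+x. ennreal (indicator K x * exp (- (\<alpha> \<bullet> x))) \<partial>lborel) = ennreal c"
      using c nn_integral_exp_cap_measure by simp
  qed (use c in auto)
  moreover have "(\<lambda>x. indicator K x * exp (- (\<alpha> \<bullet> x)))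
                  = (\<lambda>x. if x \<in> K then exp (- (\<alpha> \<bullet> x)) else 0)"
    by (auto simp: indicator_def)
  ultimately have "((\<lambda>x. exp (- (\<alpha> \<bullet> x))) has_integral c) K"
    using has_integral_restrict_UNIV by metis
  then show ?thesis
    using c by (simp add: integral_unique)
qed

lemma exp_mult_cap_measure_le_integral:
  "exp (- t) * cap_measure t \<le> integral K (\<lambda>x. exp (- (\<alpha> \<bullet> x)))"
proof -
  have "0 \<le> integral K (\<lambda>x. exp (- (\<alpha> \<bullet> x)))"
    by (cases "(\<lambda>x. exp (- (\<alpha> \<bullet> x))) integrable_on K")
       (auto intro: integral_nonneg simp: not_integrable_integral)
  then show ?thesis
    using nn_integral_exp_cap_measure_ge[of t]
    by (simp add: nn_integral_exp_cap_measure_eq_integral)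
qed

lemma integral_exp_le:
  assumes "0 < t"
  defines "d \<equiv> DIM('a)"
  shows "integral K (\<lambda>x. exp (- (\<alpha> \<bullet> x)))
           \<le> cap_measure t * (1 + fact d * (1 - gamma_fn d t) / t ^ d)"
proof -
  have "0 \<le> cap_measure t * (1 + fact d * (1 - gamma_fn d t) / t ^ d)"
    using assms(1) gamma_fn_bounds(2)[OF assms(1)] cap_measure_nonneg by simp
  then show ?thesis
    using nn_integral_exp_cap_measure_le[OF assms(1)]
    by (simp add: nn_integral_exp_cap_measure_eq_integral d_def)
qed

lemma integral_exp_pos:
  assumes "interior K \<noteq> {}"
  shows "0 < integral K (\<lambda>x. exp (- (\<alpha> \<bullet> x)))"
proof -
  obtain p r where "0 < r" "ball p r \<subseteq> K"
    using assms by (meson equals0I mem_interior)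
  define u where "u = \<alpha> \<bullet> p + norm \<alpha> * r"
  have "ball p r \<subseteq> lower_cap K \<alpha> u"
  proof
    fix y assume y: "y \<in> ball p r"
    have "\<alpha> \<bullet> (y - p) \<le> norm \<alpha> * norm (y - p)"
      using Cauchy_Schwarz_ineq2[of \<alpha> "y - p"] by linarith
    also have "\<dots> \<le> norm \<alpha> * r"
      using y by (intro mult_left_mono) (auto simp: dist_norm norm_minus_commute)
    finally show "y \<in> lower_cap K \<alpha> u"
      using y \<open>ball p r \<subseteq> K\<close> by (auto simp: u_def lower_cap_def inner_diff_right)
  qed
  then have "measure lebesgue (ball p r) \<le> cap_measure u"
    unfolding cap_measure_def using lower_cap_lmeasurable by (intro measure_mono_fmeasurable) auto
  moreover have "0 < measure lebesgue (ball p r)"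
    using content_ball_pos[OF \<open>0 < r\<close>] by simp
  ultimately have "0 < cap_measure u"
    by linarith
  then have "0 < exp (- u) * cap_measure u"
    by simp
  then show ?thesis
    using exp_mult_cap_measure_le_integral[of u] by linarith
qed

lemma measure_slab:
  assumes "\<alpha> \<noteq> 0"
  shows "measure lebesgue (slab K \<alpha> t) = cap_measure t - cap_measure (t - 1)"
proof -
  have slab: "slab K \<alpha> t
               = (lower_cap K \<alpha> t - lower_cap K \<alpha> (t - 1)) \<union> (K \<inter> {x. \<alpha> \<bullet> x = t - 1})"
    by (auto simp: slab_def lower_cap_def)
  have "negligible {x. \<alpha> \<bullet> x = t - 1}"
    using assms by (intro negligible_hyperplane) simp
  then have "K \<inter> {x. \<alpha> \<bullet> x = t - 1} \<in> null_sets lebesgue"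
    unfolding negligible_iff_null_sets[symmetric] by (rule negligible_subset) auto
  then have "measure lebesgue (slab K \<alpha> t)
               = measure lebesgue (lower_cap K \<alpha> t - lower_cap K \<alpha> (t - 1))"
    unfolding slab using lower_cap_lmeasurable by (intro measure_Un_null_set) auto
  then show ?thesis
    by (simp add: measure_lower_cap_diff)
qed

lemma cap_measure_increment_le:
  assumes "1 \<le> s" "s \<le> t - 1"
  defines "d \<equiv> DIM('a)"
  shows "(cap_measure t - cap_measure (t - 1)) * (s ^ d - (s - 1) ^ d)
           \<le> (t ^ d - (t - 1) ^ d) * (cap_measure s - cap_measure (s - 1))"
proof -
  have "0 < d"
    by (simp add: d_def)
  define F where "F w = cap_measure (root d w)" for w
  have mono: "F v \<le> F w" if "0 \<le> v" "v \<le> w" for v w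
    unfolding F_def using that \<open>0 < d\<close> by (intro cap_measure_mono real_root_le_mono) auto
  have scale: "m * (F w - F v) \<le> F (m * w) - F (m * v)"
    if "0 \<le> v" "v \<le> w" "0 < m" "m \<le> 1" for v w m
  proof -
    have "root d m ^ d * (cap_measure (root d w) - cap_measure (root d v))
            \<le> cap_measure (root d m * root d w) - cap_measure (root d m * root d v)"
      using that \<open>0 < d\<close> unfolding d_def
      by (intro cap_measure_homothety real_root_le_mono) (auto simp: real_root_le_1_iff)
    then show ?thesis
      using that \<open>0 < d\<close> by (simp add: F_def real_root_mult)
  qed
  have "(F (t ^ d) - F ((t - 1) ^ d)) * (s ^ d - (s - 1) ^ d)
          \<le> (t ^ d - (t - 1) ^ d) * (F (s ^ d) - F ((s - 1) ^ d))"
    using assms(1,2) \<open>0 < d\<close>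
    by (intro increment_slope_antimono[OF mono scale] power_mono power_strict_mono) auto
  moreover have "F (x ^ d) = cap_measure x" if "0 \<le> x" for x
    using that \<open>0 < d\<close> by (simp add: F_def real_root_power_cancel)
  ultimately show ?thesis
    using assms(1,2) by simp
qed

lemma gamma_fn_le_cap_measure_ratio:
  assumes "0 < t" "interior K \<noteq> {}"
  shows "gamma_fn DIM('a) t \<le> cap_measure t / integral K (\<lambda>x. exp (- (\<alpha> \<bullet> x)))"
proof -
  let ?c = "integral K (\<lambda>x. exp (- (\<alpha> \<bullet> x)))" and ?g = "gamma_fn DIM('a) t"
  have "?g * ?c \<le> ?g * (cap_measure t * (1 + fact DIM('a) * (1 - ?g) / t ^ DIM('a)))"
    using integral_exp_le[OF assms(1)] gamma_fn_bounds(1)[OF assms(1)]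
    by (intro mult_left_mono) auto
  also have "\<dots> = cap_measure t * (?g * (1 + fact DIM('a) * (1 - ?g) / t ^ DIM('a)))"
    by simp
  also have "\<dots> \<le> cap_measure t"
    using gamma_fn_mult_le_1[OF assms(1)] cap_measure_nonneg[of t] by (simp add: mult_left_le)
  finally show ?thesis
    using integral_exp_pos[OF assms(2)] by (simp add: le_divide_eq)
qed

lemma cap_measure_ratio_le_exp:
  assumes "interior K \<noteq> {}"
  shows "cap_measure t / integral K (\<lambda>x. exp (- (\<alpha> \<bullet> x))) \<le> exp t"
proof -
  have "cap_measure t = exp t * (exp (- t) * cap_measure t)"
    by (simp add: exp_minus)
  also have "\<dots> \<le> exp t * integral K (\<lambda>x. exp (- (\<alpha> \<bullet> x)))"
    using exp_mult_cap_measure_le_integral by (intro mult_left_mono) auto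
  finally have "cap_measure t \<le> exp t * integral K (\<lambda>x. exp (- (\<alpha> \<bullet> x)))" .
  then show ?thesis
    using integral_exp_pos[OF assms] by (simp add: divide_le_eq)
qed

lemma measure_slab_le:
  assumes "\<alpha> \<noteq> 0" "1 \<le> s" "s \<le> t - 1"
  defines "d \<equiv> DIM('a)"
  shows "measure lebesgue (slab K \<alpha> t)
           \<le> (t ^ d - (t - 1) ^ d) / (s ^ d - (s - 1) ^ d) * measure lebesgue (slab K \<alpha> s)"
proof -
  have "(s - 1) ^ d < s ^ d"
    using assms(2) by (intro power_strict_mono) (auto simp: d_def)
  then show ?thesis
    using cap_measure_increment_le[OF assms(2,3)]
    by (simp add: measure_slab[OF assms(1)] d_def le_divide_eq mult.commute)
qed

end

theorem lemmaS17:
  fixes K :: "'a::euclidean_space set" and \<alpha> :: 'a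
  assumes "closed K" and "convex K" and "line_free K" and "interior K \<noteq> {}"
    and "\<alpha> \<in> interior (dual_cone (rec_cone K)) - {0}"
    and "(INF x\<in>K. \<alpha> \<bullet> x) = 0"
  defines "c \<equiv> integral K (\<lambda>x. exp (- (\<alpha> \<bullet> x)))"
  shows "(\<forall>t::real. t > 0 \<longrightarrow>
            gamma_fn DIM('a) t \<le> measure lebesgue (lower_cap K \<alpha> t) / c
          \<and> measure lebesgue (lower_cap K \<alpha> t) / c \<le> exp t)
       \<and> (\<forall>s t::real. 1 \<le> s \<and> s \<le> t - 1 \<longrightarrow>
            measure lebesgue (slab K \<alpha> t)
              \<le> (t ^ DIM('a) - (t - 1) ^ DIM('a)) / (s ^ DIM('a) - (s - 1) ^ DIM('a))
                 * measure lebesgue (slab K \<alpha> s))"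
proof -
  have \<alpha>: "\<alpha> \<in> interior (dual_cone (rec_cone K))" "\<alpha> \<noteq> 0"
    using assms(5) by auto
  have caps: "bounded (lower_cap K \<alpha> t)" for t
    using assms(1,2) interior_dual_cone_pos[OF \<alpha>(1)] by (rule bounded_lower_cap)
  have "compact (K \<inter> {x. \<alpha> \<bullet> x \<le> t})" for t
    using caps[of t] assms(1)
    by (simp add: lower_cap_def compact_eq_bounded_closed closed_Int closed_halfspace_le)
  moreover have "K \<noteq> {}"
    using assms(4) interior_subset by blast
  moreover have "continuous_on K (\<lambda>x. \<alpha> \<bullet> x)"
    by (intro continuous_intros)
  ultimately obtain x0 where x0: "x0 \<in> K" "\<And>x. x \<in> K \<Longrightarrow> \<alpha> \<bullet> x0 \<le> \<alpha> \<bullet> x"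
    using compact_sublevels_attains_inf by blast
  then have "\<alpha> \<bullet> x0 = 0"
    using assms(6) cInf_eq_minimum[of "\<alpha> \<bullet> x0" "(\<lambda>x. \<alpha> \<bullet> x) ` K"] by auto
  then interpret convex_bounded_caps K \<alpha> x0
    using assms(1,2) caps x0 by unfold_locales auto
  show ?thesis
    unfolding c_def cap_measure_def[symmetric]
    using gamma_fn_le_cap_measure_ratio[OF _ assms(4)] cap_measure_ratio_le_exp[OF assms(4)]
      measure_slab_le[OF \<alpha>(2)] by blast
qed

end
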